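(* Let $L$ be an $R_0$-algebra and $k\in[0,1)$. Let $\{F_t\mid t\in\Lambda\}$, where $\Lambda\subseteq(0,\tfrac{1-k}{2}]$, be a collection of fated filters of $L$ such that (i) $L=\bigcup_{t\in\Lambda}F_t$, and (ii) for all $s,t\in\Lambda$, $s<t$ if and only if $F_t\subset F_s$. Then the fuzzy subset $\mu$ of $L$ defined by $\mu(x)=\sup\{t\in\Lambda\mid x\in F_t\}$ for all $x\in L$ is an $(\in,\in\vee q_k)$-fuzzy fated filter of $L$.
   Context: An $R_0$-algebra is a bounded distributive lattice $(L,\wedge,\vee,0,1)$ with an order-reversing involution $\neg$ and a binary operation $\to$ such that for all $x,y,z\in L$: $x\to y=\neg y\to\neg x$; $1\to x=x$; $(y\to z)\wedge((x\to y)\to(x\to z))=y\to z$; $x\to(y\to z)=y\to(x\to z)$; $x\to(y\vee z)=(x\to y)\vee(x\to z)$; $(x\to y)\vee((x\to y)\to(\neg x\vee y))=1$. A fated filter of $L$ is a nonempty subset $A\subseteq L$ with $1\in A$ such that for all $x,y\in L$ and $a\in A$, $a\to((x\to y)\to x)\in A$ implies $x\in A$. For $x\in L$, $t\in(0,1]$ and a fuzzy subset $\mu:L\to[0,1]$: $x_t\in\mu$ iff $\mu(x)\ge t$; $x_t\,q_k\,\mu$ iff $\mu(x)+t+k>1$; $x_t\in\vee q_k\,\mu$ iff $x_t\in\mu$ or $x_t\,q_k\,\mu$. $\mu$ is an $(\in,\in\vee q_k)$-fuzzy fated filter of $L$ if (1) for all $x\in L$, $t\in(0,1]$: $x_t\in\mu\Rightarrow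 1_t\in\vee q_k\,\mu$; and (2) for all $x,a,y\in L$, $t,s\in(0,1]$: if $(a\to((x\to y)\to x))_t\in\mu$ and $a_s\in\mu$ then $x_{\min\{t,s\}}\in\vee q_k\,\mu$. *)

theory Defs
  imports Main "HOL.Real"
begin

definition R0_algebra ::
  "('a::{distrib_lattice,bounded_lattice} \<Rightarrow> 'a) \<Rightarrow> ('a \<Rightarrow> 'a \<Rightarrow> 'a) \<Rightarrow> bool" where
  "R0_algebra neg imp \<longleftrightarrow>
     (\<forall>x. neg (neg x) = x) \<and>
     (\<forall>x y. x \<le> y \<longrightarrow> neg y \<le> neg x) \<and>
     (\<forall>x y. imp x y = imp (neg y) (neg x)) \<and>
     (\<forall>x. imp top x = x) \<and>
     (\<forall>x y z. inf (imp y z) (imp (imp x y) (imp x z)) = imp y z) \<and>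
     (\<forall>x y z. imp x (imp y z) = imp y (imp x z)) \<and>
     (\<forall>x y z. imp x (sup y z) = sup (imp x y) (imp x z)) \<and>
     (\<forall>x y. sup (imp x y) (imp (imp x y) (sup (neg x) y)) = top)"

definition fated_filter :: "('a::bounded_lattice \<Rightarrow> 'a \<Rightarrow> 'a) \<Rightarrow> 'a set \<Rightarrow> bool" where
  "fated_filter imp A \<longleftrightarrow> A \<noteq> {} \<and> top \<in> A \<and>
     (\<forall>x y a. a \<in> A \<longrightarrow> imp a (imp (imp x y) x) \<in> A \<longrightarrow> x \<in> A)"

text \<open>Fuzzy point relations: \<open>x_t \<in> \<mu>\<close> and \<open>x_t \<in>\<or>q_k \<mu>\<close>.\<close>
definition fin :: "('a \<Rightarrow> real) \<Rightarrow> 'a \<Rightarrow> real \<Rightarrow> bool" where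
  "fin \<mu> x t \<longleftrightarrow> \<mu> x \<ge> t"

definition fq :: "real \<Rightarrow> ('a \<Rightarrow> real) \<Rightarrow> 'a \<Rightarrow> real \<Rightarrow> bool" where
  "fq k \<mu> x t \<longleftrightarrow> \<mu> x + t + k > 1"

definition fin_or_q :: "real \<Rightarrow> ('a \<Rightarrow> real) \<Rightarrow> 'a \<Rightarrow> real \<Rightarrow> bool" where
  "fin_or_q k \<mu> x t \<longleftrightarrow> fin \<mu> x t \<or> fq k \<mu> x t"

definition fuzzy_fated_filter_k ::
  "real \<Rightarrow> ('a::bounded_lattice \<Rightarrow> 'a \<Rightarrow> 'a) \<Rightarrow> ('a \<Rightarrow> real) \<Rightarrow> bool" where
  "fuzzy_fated_filter_k k imp \<mu> \<longleftrightarrow>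
     (\<forall>x. 0 \<le> \<mu> x \<and> \<mu> x \<le> 1) \<and>
     (\<forall>x t. 0 < t \<and> t \<le> 1 \<longrightarrow> fin \<mu> x t \<longrightarrow> fin_or_q k \<mu> top t) \<and>
     (\<forall>x a y t s. 0 < t \<and> t \<le> 1 \<and> 0 < s \<and> s \<le> 1 \<longrightarrow>
        fin \<mu> (imp a (imp (imp x y) x)) t \<longrightarrow> fin \<mu> a s \<longrightarrow>
        fin_or_q k \<mu> x (min t s))"

end

theory Submission
  imports Defs
begin

text \<open>The level sets of \<open>\<mu>\<close> are (up to the supremum) the filters \<open>F t\<close>, and the chain
  condition makes any two of them comparable: if \<open>\<mu> x\<close> were below both \<open>\<mu> a\<close> and
  \<open>\<mu> (a \<rightarrow> ((x \<rightarrow> y) \<rightarrow> x))\<close>, both elements would lie in one filter \<open>F w\<close> with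
  \<open>w > \<mu> x\<close>, which then contains \<open>x\<close>. So \<open>\<mu>\<close> is even an \<open>(\<in>,\<in>)\<close>-fuzzy fated filter.\<close>

lemma fuzzy_fated_filter_kI:
  assumes "\<And>x. 0 \<le> \<mu> x" and "\<And>x. \<mu> x \<le> 1"
    and "\<And>x. \<mu> x \<le> \<mu> top"
    and "\<And>a x y. min (\<mu> (imp a (imp (imp x y) x))) (\<mu> a) \<le> \<mu> x"
  shows "fuzzy_fated_filter_k k imp \<mu>"
  unfolding fuzzy_fated_filter_k_def fin_or_q_def fin_def
  using assms by (smt (verit))

locale fated_filter_chain =
  fixes imp :: "'a::bounded_lattice \<Rightarrow> 'a \<Rightarrow> 'a"
    and \<Lambda> :: "real set" and F :: "real \<Rightarrow> 'a set"
  assumes levels_unit: "\<Lambda> \<subseteq> {0<..1}"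
    and fated: "\<And>t. t \<in> \<Lambda> \<Longrightarrow> fated_filter imp (F t)"
    and covers: "(\<Union>t\<in>\<Lambda>. F t) = UNIV"
    and antitone: "\<And>s t. s \<in> \<Lambda> \<Longrightarrow> t \<in> \<Lambda> \<Longrightarrow> s \<le> t \<Longrightarrow> F t \<subseteq> F s"
begin

definition level_sup :: "'a \<Rightarrow> real" where
  "level_sup x = Sup {t \<in> \<Lambda>. x \<in> F t}"

lemma levels_nonempty: "{t \<in> \<Lambda>. x \<in> F t} \<noteq> {}"
  using covers by blast

lemma levels_bdd_above: "bdd_above {t \<in> \<Lambda>. x \<in> F t}"
  using levels_unit by (intro bdd_aboveI[where M = 1]) auto

lemma level_sup_upper: "t \<in> \<Lambda> \<Longrightarrow> x \<in> F t \<Longrightarrow> t \<le> level_sup x"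
  unfolding level_sup_def by (rule cSup_upper) (auto intro: levels_bdd_above)

lemma level_sup_nonneg: "0 \<le> level_sup x"
proof -
  obtain t where "t \<in> \<Lambda>" "x \<in> F t"
    using levels_nonempty by blast
  with levels_unit level_sup_upper show ?thesis by force
qed

lemma level_sup_le_one: "level_sup x \<le> 1"
  unfolding level_sup_def using levels_unit
  by (intro cSup_least[OF levels_nonempty]) auto

lemma less_level_sup_obtain:
  assumes "r < level_sup x"
  obtains t where "t \<in> \<Lambda>" "x \<in> F t" "r < t"
  using assms less_cSup_iff[OF levels_nonempty levels_bdd_above]
  unfolding level_sup_def by auto

lemma level_sup_le_top: "level_sup x \<le> level_sup top"
proof -
  have "t \<in> \<Lambda> \<Longrightarrow> top \<in> F t" for t
    using fated unfolding fated_filter_def by blast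
  then show ?thesis
    unfolding level_sup_def[of x]
    by (intro cSup_least[OF levels_nonempty]) (auto intro: level_sup_upper)
qed

lemma level_sup_fated:
  "min (level_sup (imp a (imp (imp x y) x))) (level_sup a) \<le> level_sup x"
proof (rule ccontr)
  let ?b = "imp a (imp (imp x y) x)"
  assume "\<not> ?thesis"
  then have "level_sup x < level_sup ?b" "level_sup x < level_sup a"
    by auto
  then obtain u v where u: "u \<in> \<Lambda>" "?b \<in> F u" "level_sup x < u"
    and v: "v \<in> \<Lambda>" "a \<in> F v" "level_sup x < v"
    by (metis less_level_sup_obtain)
  define w where "w = min u v"
  have w: "w \<in> \<Lambda>" "level_sup x < w"
    using u v by (auto simp: w_def min_def)
  have "?b \<in> F w" "a \<in> F w"
    using u v antitone[of u v] antitone[of v u] by (auto simp: w_def min_def)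
  then have "x \<in> F w"
    using fated[OF w(1)] unfolding fated_filter_def by blast
  with level_sup_upper[OF w(1)] w(2) show False
    by fastforce
qed

lemma fuzzy_fated_filter_level_sup: "fuzzy_fated_filter_k k imp level_sup"
  using level_sup_nonneg level_sup_le_one level_sup_le_top level_sup_fated
  by (rule fuzzy_fated_filter_kI)

end

theorem theorem3p28:
  fixes neg :: "'a::{distrib_lattice,bounded_lattice} \<Rightarrow> 'a"
    and imp :: "'a \<Rightarrow> 'a \<Rightarrow> 'a"
    and k :: real and \<Lambda> :: "real set" and F :: "real \<Rightarrow> 'a set"
  assumes "R0_algebra neg imp"
    and "0 \<le> k" and "k < 1"
    and "\<Lambda> \<subseteq> {0<..(1 - k) / 2}"
    and "\<forall>t\<in>\<Lambda>. fated_filter imp (F t)"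
    and "(UNIV :: 'a set) = (\<Union>t\<in>\<Lambda>. F t)"
    and "\<forall>s\<in>\<Lambda>. \<forall>t\<in>\<Lambda>. s < t \<longleftrightarrow> F t \<subset> F s"
  shows "fuzzy_fated_filter_k k imp (\<lambda>x. Sup {t \<in> \<Lambda>. x \<in> F t})"
proof -
  interpret fated_filter_chain imp \<Lambda> F
  proof
    show "\<Lambda> \<subseteq> {0<..1}"
      using assms(2,4) by force
    show "(\<Union>t\<in>\<Lambda>. F t) = UNIV"
      using assms(6) by simp
    fix s t assume "s \<in> \<Lambda>" "t \<in> \<Lambda>" "s \<le> t"
    then show "F t \<subseteq> F s"
      using assms(7) by (cases "s = t") (auto simp: less_le)
  qed (use assms(5) in blast)
  show ?thesis
    using fuzzy_fated_filter_level_sup by (simp add: level_sup_def[abs_def])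
qed

end
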